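(* Let $\beta>1$ and let $\delta>0$ be fixed and arbitrarily small. Then, as $n\to\infty$, every achievable rate $R$ for the outer channel satisfies $R\le(p_c+\delta)(1-1/\beta)$.
   Context: The outer channel takes as input a binary matrix $\mathbf{X}\in\mathbb{F}_2^{n\times l}$ with rows $\mathbf{x}_1,\dots,\mathbf{x}_n$ and acts in two stages. Channel-1 acts independently on each row and outputs $\mathbf{y}_i$, where - $\mathbf{y}_i=\mathbf{x}_i$ with probability $p_c$; - $\mathbf{y}_i=?$ (an erased row) with probability $p_e$; - $\mathbf{y}_i=\mathbf{e}$ with probability $p_s/(2^l-1)$ for each $\mathbf{e}\in\mathbb{F}_2^l\setminus\{\mathbf{x}_i\}$. Here $p_c+p_e+p_s=1$ and the probabilities $p_c,p_e,p_s$ are fixed. Channel-2 takes the $n$-row matrix $\mathbf{Y}$ (erased rows kept as "?") and outputs $\mathbf{Z}$, a uniformly random permutation of its rows (each of the $n!$ permutations has probability $1/n!$). A code maps $\mathbf{U}\in\mathbb{F}_2^{k\times w}$ injectively to $\mathbf{X}\in\mathbb{F}_2^{n\times l}$ and comes with a decoder $\mathbf{Z}\mapsto\widehat{\mathbf{U}}$. Its rate is $R=kw/(nl)$. We set $\beta=l/\log_2 n$, held fixed as $n\to\infty$. A rate $R$ is achievable if some family of rate-$R$ codes has error probability, for uniformly distributed $\mathbf{U}$, tending to $0$ as $n\to\infty$. *)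

theory Defs
  imports "HOL-Probability.Probability" "HOL-Combinatorics.Permutations"
begin

definition bin_mats :: "nat \<Rightarrow> nat \<Rightarrow> bool list list set" where
  "bin_mats r c = {M. length M = r \<and> (\<forall>row\<in>set M. length row = c)}"

text \<open>Channel-1 acting on a single row x of length l. An erased row is None.\<close>
definition row_chan :: "real \<Rightarrow> real \<Rightarrow> real \<Rightarrow> nat \<Rightarrow> bool list \<Rightarrow> bool list option pmf" where
  "row_chan pc pe ps l x = embed_pmf (\<lambda>y. case y of
       None \<Rightarrow> pe
     | Some e \<Rightarrow> (if e = x then pc
                 else if length e = l then ps / (2 ^ l - 1) else 0))"

fun chan1 :: "real \<Rightarrow> real \<Rightarrow> real \<Rightarrow> nat \<Rightarrow> bool list list \<Rightarrow> bool list option list pmf" where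
  "chan1 pc pe ps l [] = return_pmf []"
| "chan1 pc pe ps l (x # xs) =
     bind_pmf (row_chan pc pe ps l x) (\<lambda>y. map_pmf (\<lambda>ys. y # ys) (chan1 pc pe ps l xs))"

definition chan2 :: "'a list \<Rightarrow> 'a list pmf" where
  "chan2 Y = map_pmf (\<lambda>\<sigma>. map (\<lambda>i. Y ! \<sigma> i) [0..<length Y])
                     (pmf_of_set {\<sigma>. \<sigma> permutes {0..<length Y}})"

definition outer_chan :: "real \<Rightarrow> real \<Rightarrow> real \<Rightarrow> nat \<Rightarrow> bool list list \<Rightarrow> bool list option list pmf" where
  "outer_chan pc pe ps l X = bind_pmf (chan1 pc pe ps l X) chan2"

definition is_code :: "nat \<Rightarrow> nat \<Rightarrow> nat \<Rightarrow> nat \<Rightarrow> (bool list list \<Rightarrow> bool list list) \<Rightarrow> bool" where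
  "is_code n l k w enc \<longleftrightarrow> inj_on enc (bin_mats k w) \<and> enc ` bin_mats k w \<subseteq> bin_mats n l"

definition err_prob :: "real \<Rightarrow> real \<Rightarrow> real \<Rightarrow> nat \<Rightarrow> nat \<Rightarrow> nat \<Rightarrow>
    (bool list list \<Rightarrow> bool list list) \<Rightarrow> (bool list option list \<Rightarrow> bool list list) \<Rightarrow> real" where
  "err_prob pc pe ps l k w enc dec =
     (\<Sum>U\<in>bin_mats k w. measure_pmf.prob (outer_chan pc pe ps l (enc U)) {Z. dec Z \<noteq> U})
       / real (card (bin_mats k w))"

definition achievable_rate :: "real \<Rightarrow> real \<Rightarrow> real \<Rightarrow> real \<Rightarrow> real \<Rightarrow> bool" where
  "achievable_rate pc pe ps beta R \<longleftrightarrow>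
     (\<exists>(l::nat \<Rightarrow> nat) (k::nat \<Rightarrow> nat) (w::nat \<Rightarrow> nat) enc dec.
        (\<forall>n. is_code n (l n) (k n) (w n) (enc n))
      \<and> (\<lambda>n. real (l n) / log 2 (real n)) \<longlonglongrightarrow> beta
      \<and> (\<lambda>n. real (k n * w n) / real (n * l n)) \<longlonglongrightarrow> R
      \<and> (\<lambda>n. err_prob pc pe ps (l n) (k n) (w n) (enc n) (dec n)) \<longlonglongrightarrow> 0)"

end

(*
  Condition on the set S of rows that Channel-1 delivers intact.  Channel-2 reveals only the
  multiset of received rows, so once the other rows are fixed the decoder can be right for at
  most as many messages as there are multisets of |S| rows, namely (2^l + |S| - 1) choose |S|.
  Sets S with more than m = q n rows, q = pc + delta/2 > pc, have exponentially small
  probability (Chernoff bound).  Hence vanishing error forces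
  2^(k w) <= 4 ((2^l + m - 1) choose m) <= 4 (e 2^(l+1) / m)^m, and taking logarithms,
  k w / (n l) <= (m / n) (1 - log2 n / l + o(1)), which tends to q (1 - 1/beta).
*)

theory Submission
  imports Defs "HOL-Real_Asymp.Real_Asymp"
begin

section \<open>The channel distributions\<close>

definition bit_rows :: "nat \<Rightarrow> bool list set" where
  "bit_rows l = {e. length e = l}"

definition row_outputs :: "nat \<Rightarrow> bool list option set" where
  "row_outputs l = insert None (Some ` bit_rows l)"

definition output_lists :: "nat \<Rightarrow> nat \<Rightarrow> bool list option list set" where
  "output_lists l n = {y. set y \<subseteq> row_outputs l \<and> length y = n}"

definition row_density :: "real \<Rightarrow> real \<Rightarrow> real \<Rightarrow> nat \<Rightarrow> bool list \<Rightarrow> bool list option \<Rightarrow> real" where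
  "row_density pc pe ps l x a = (case a of None \<Rightarrow> pe
     | Some e \<Rightarrow> (if e = x then pc else if length e = l then ps / (2 ^ l - 1) else 0))"

lemma finite_bit_rows [simp]: "finite (bit_rows l)"
  and card_bit_rows: "card (bit_rows l) = 2 ^ l"
  using finite_lists_length_eq[of "UNIV :: bool set" l] card_lists_length_eq[of "UNIV :: bool set" l]
  by (simp_all add: bit_rows_def)

lemma finite_row_outputs [simp]: "finite (row_outputs l)"
  by (simp add: row_outputs_def)

lemma finite_output_lists [simp]: "finite (output_lists l n)"
  by (simp add: output_lists_def finite_lists_length_eq)

lemma sum_row_outputs: "(\<Sum>a\<in>row_outputs l. f a) = f None + (\<Sum>e\<in>bit_rows l. f (Some e))"
  unfolding row_outputs_def by (subst sum.insert) (auto simp: sum.reindex)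

lemma two_power_ge_2: "l \<ge> 1 \<Longrightarrow> (2::real) ^ l \<ge> 2"
  using power_increasing[of 1 l "2::real"] by simp

lemma row_density_nonneg: "pc \<ge> 0 \<Longrightarrow> pe \<ge> 0 \<Longrightarrow> ps \<ge> 0 \<Longrightarrow> row_density pc pe ps l x a \<ge> 0"
  by (auto simp: row_density_def split: option.split)

lemma row_density_eq_0: "length x = l \<Longrightarrow> a \<notin> row_outputs l \<Longrightarrow> row_density pc pe ps l x a = 0"
  by (auto simp: row_density_def row_outputs_def bit_rows_def split: option.split)

lemma sum_row_density:
  assumes "length x = l" "l \<ge> 1"
  shows "(\<Sum>a\<in>row_outputs l. row_density pc pe ps l x a) = pc + pe + ps"
proof -
  have x: "x \<in> bit_rows l" using assms(1) by (simp add: bit_rows_def)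
  have card: "real (card (bit_rows l - {x})) = 2 ^ l - 1"
    using x by (simp add: card_bit_rows)
  have "(\<Sum>e\<in>bit_rows l. row_density pc pe ps l x (Some e)) = pc + (\<Sum>e\<in>bit_rows l - {x}. ps / (2 ^ l - 1))"
    by (subst sum.remove[OF finite_bit_rows x]) (auto simp: row_density_def bit_rows_def intro!: sum.cong)
  also have "\<dots> = pc + ps"
    using card two_power_ge_2[OF assms(2)] by simp
  finally show ?thesis by (simp add: sum_row_outputs row_density_def)
qed

lemma pmf_row_chan:
  assumes "length x = l" "l \<ge> 1" "pc \<ge> 0" "pe \<ge> 0" "ps \<ge> 0" "pc + pe + ps = 1"
  shows "pmf (row_chan pc pe ps l x) = row_density pc pe ps l x"
proof -
  have nonneg: "\<And>a. row_density pc pe ps l x a \<ge> 0"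
    using assms(3-5) by (rule row_density_nonneg)
  have "(\<integral>\<^sup>+a. ennreal (row_density pc pe ps l x a) \<partial>count_space UNIV)
      = (\<Sum>a\<in>row_outputs l. ennreal (row_density pc pe ps l x a))"
    by (rule nn_integral_count_space') (auto simp: row_density_eq_0[OF assms(1)])
  also have "\<dots> = 1"
    using assms by (simp add: sum_ennreal nonneg sum_row_density)
  finally have mass: "(\<integral>\<^sup>+a. ennreal (row_density pc pe ps l x a) \<partial>count_space UNIV) = 1" .
  have "row_chan pc pe ps l x = embed_pmf (row_density pc pe ps l x)"
    unfolding row_chan_def row_density_def ..
  then show ?thesis
    using pmf_embed_pmf[OF nonneg mass] by (simp add: fun_eq_iff)
qed

lemma pmf_map_Cons:
  "pmf (map_pmf (Cons a) p) ys = (case ys of [] \<Rightarrow> 0 | b # ys' \<Rightarrow> of_bool (a = b) * pmf p ys')"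
proof (cases ys)
  case Nil
  then show ?thesis by (auto simp: pmf_eq_0_set_pmf)
next
  case (Cons b ys')
  then show ?thesis
    by (cases "a = b") (auto simp: pmf_map_inj' pmf_eq_0_set_pmf)
qed

lemma pmf_chan1:
  assumes "\<forall>x\<in>set X. length x = l" "l \<ge> 1" "pc \<ge> 0" "pe \<ge> 0" "ps \<ge> 0" "pc + pe + ps = 1"
  shows "pmf (chan1 pc pe ps l X) y =
    of_bool (length y = length X) * (\<Prod>i<length X. row_density pc pe ps l (X ! i) (y ! i))"
  using assms(1)
proof (induction X arbitrary: y)
  case Nil
  then show ?case by (simp add: pmf_return)
next
  case (Cons x X)
  show ?case
  proof (cases y)
    case Nil
    then show ?thesis by (simp add: pmf_bind pmf_map_Cons)
  next
    case (Cons b ys)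
    have "pmf (chan1 pc pe ps l (x # X)) y = measure_pmf.expectation (row_chan pc pe ps l x)
           (\<lambda>a. of_bool (a = b) * pmf (chan1 pc pe ps l X) ys)"
      using Cons by (simp add: pmf_bind pmf_map_Cons)
    also have "\<dots> = pmf (row_chan pc pe ps l x) b * pmf (chan1 pc pe ps l X) ys"
      by (subst integral_measure_pmf[of "{b}"]) auto
    finally show ?thesis
      using Cons Cons.IH[of ys] Cons.prems pmf_row_chan[of x l, OF _ assms(2-6)]
      by (simp add: prod.lessThan_Suc_shift del: prod.lessThan_Suc)
  qed
qed

lemma set_pmf_chan1:
  assumes "\<forall>x\<in>set X. length x = l" "l \<ge> 1" "pc \<ge> 0" "pe \<ge> 0" "ps \<ge> 0" "pc + pe + ps = 1"
  shows "set_pmf (chan1 pc pe ps l X) \<subseteq> output_lists l (length X)"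
proof
  fix y assume "y \<in> set_pmf (chan1 pc pe ps l X)"
  then have nz: "of_bool (length y = length X) * (\<Prod>i<length X. row_density pc pe ps l (X ! i) (y ! i)) \<noteq> 0"
    by (simp add: set_pmf_eq pmf_chan1[OF assms])
  then have "length y = length X" by simp
  moreover have "y ! i \<in> row_outputs l" if "i < length y" for i
  proof (rule ccontr)
    assume "y ! i \<notin> row_outputs l"
    then have "row_density pc pe ps l (X ! i) (y ! i) = 0"
      using that \<open>length y = length X\<close> assms(1) by (intro row_density_eq_0) auto
    then show False
      using nz that \<open>length y = length X\<close> by (auto simp: prod_zero_iff)
  qed
  ultimately show "y \<in> output_lists l (length X)"
    by (auto simp: output_lists_def in_set_conv_nth)
qed

lemma prob_outer_chan:
  assumes "\<forall>x\<in>set X. length x = l" "l \<ge> 1" "pc \<ge> 0" "pe \<ge> 0" "ps \<ge> 0" "pc + pe + ps = 1"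
  shows "measure_pmf.prob (outer_chan pc pe ps l X) A =
     (\<Sum>y\<in>output_lists l (length X).
        (\<Prod>i<length X. row_density pc pe ps l (X ! i) (y ! i)) * measure_pmf.prob (chan2 y) A)"
proof -
  let ?Y = "output_lists l (length X)"
  let ?p = "\<lambda>y. (\<Prod>i<length X. row_density pc pe ps l (X ! i) (y ! i))"
  have nonneg: "\<And>y. 0 \<le> ?p y"
    by (rule prod_nonneg) (use row_density_nonneg assms(3-5) in auto)
  have "emeasure (outer_chan pc pe ps l X) A =
      (\<integral>\<^sup>+y. emeasure (chan2 y) A \<partial>chan1 pc pe ps l X)"
    unfolding outer_chan_def by (rule emeasure_bind_pmf)
  also have "\<dots> = (\<Sum>y\<in>?Y. emeasure (chan2 y) A * ennreal (pmf (chan1 pc pe ps l X) y))"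
    by (rule nn_integral_measure_pmf_support) (use set_pmf_chan1[OF assms] in auto)
  also have "\<dots> = ennreal (\<Sum>y\<in>?Y. ?p y * measure_pmf.prob (chan2 y) A)"
    by (subst sum_ennreal[symmetric]) (auto simp: nonneg pmf_chan1[OF assms] output_lists_def
        measure_pmf.emeasure_eq_measure ennreal_mult' mult.commute intro!: sum.cong)
  finally show ?thesis
    by (simp add: measure_pmf.emeasure_eq_measure nonneg sum_nonneg)
qed

lemma chan2_eq_permute_list:
  "chan2 y = map_pmf (\<lambda>\<sigma>. permute_list \<sigma> y) (pmf_of_set {\<sigma>. \<sigma> permutes {..<length y}})"
  unfolding chan2_def permute_list_def by (simp add: atLeast0LessThan)

lemma chan2_mset_eq:
  assumes "mset y = mset y'"
  shows "chan2 y = chan2 y'"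
proof -
  obtain p where p: "p permutes {..<length y'}" "permute_list p y' = y"
    using mset_eq_permutation[OF assms] by blast
  let ?P = "{\<sigma>. \<sigma> permutes {..<length y'}}"
  have fin: "finite ?P" and ne: "?P \<noteq> {}"
    using permutes_id[of "{..<length y'}"] by (auto simp: finite_permutations simp del: permutes_id)
  have inj: "inj_on ((\<circ>) p) ?P"
  proof (rule inj_onI)
    fix \<sigma> \<tau> assume "p \<circ> \<sigma> = p \<circ> \<tau>"
    then have "\<And>x. p (\<sigma> x) = p (\<tau> x)" by (metis comp_apply)
    then show "\<sigma> = \<tau>" using permutes_inj[OF p(1)] by (auto simp: inj_def)
  qed
  have img: "(\<circ>) p ` ?P = ?P"
  proof
    show "(\<circ>) p ` ?P \<subseteq> ?P" using p(1) by (auto intro: permutes_compose)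
    show "?P \<subseteq> (\<circ>) p ` ?P"
    proof
      fix \<tau> assume "\<tau> \<in> ?P"
      then have "inv p \<circ> \<tau> \<in> ?P" and "\<tau> = p \<circ> (inv p \<circ> \<tau>)"
        using p(1) by (auto intro: permutes_compose permutes_inv simp: o_assoc permutes_inv_o)
      then show "\<tau> \<in> (\<circ>) p ` ?P" by blast
    qed
  qed
  have uniform: "map_pmf ((\<circ>) p) (pmf_of_set ?P) = pmf_of_set ?P"
    using map_pmf_of_set_inj[OF inj ne fin] img by simp
  have "chan2 y = map_pmf (\<lambda>\<sigma>. permute_list (p \<circ> \<sigma>) y') (pmf_of_set ?P)"
    unfolding chan2_eq_permute_list p(2)[symmetric]
    by (rule map_pmf_cong) (auto simp: set_pmf_of_set[OF ne fin] intro!: permute_list_compose[symmetric])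
  also have "\<dots> = map_pmf (\<lambda>\<sigma>. permute_list \<sigma> y') (map_pmf ((\<circ>) p) (pmf_of_set ?P))"
    by (simp add: pmf.map_comp o_def)
  also have "\<dots> = chan2 y'"
    unfolding uniform chan2_eq_permute_list ..
  finally show ?thesis .
qed

lemma sum_prob_preimages_le_1:
  assumes "finite A"
  shows "(\<Sum>u\<in>A. measure_pmf.prob p {z. f z = u}) \<le> 1"
proof -
  have "(\<Sum>u\<in>A. measure_pmf.prob p {z. f z = u}) = measure_pmf.prob p (\<Union>u\<in>A. {z. f z = u})"
    by (rule measure_pmf.finite_measure_finite_Union[symmetric]) (auto simp: assms disjoint_family_on_def)
  then show ?thesis by simp
qed

section \<open>Counting correctly decoded messages\<close>

text \<open>Read \<open>p u u'\<close> as the probability of decoding \<open>u'\<close> when \<open>u\<close> was sent: if this only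
  depends on the class \<open>h u\<close>, then at most one message per class can be decoded correctly.\<close>

lemma sum_diagonal_le_card_image:
  fixes p :: "'u \<Rightarrow> 'u \<Rightarrow> real"
  assumes "finite M"
    and same_class: "\<And>u u'. u \<in> M \<Longrightarrow> u' \<in> M \<Longrightarrow> h u = h u' \<Longrightarrow> p u = p u'"
    and sum_le_1: "\<And>u M'. u \<in> M \<Longrightarrow> M' \<subseteq> M \<Longrightarrow> (\<Sum>u'\<in>M'. p u u') \<le> 1"
  shows "(\<Sum>u\<in>M. p u u) \<le> card (h ` M)"
proof -
  have "(\<Sum>u\<in>M. p u u) = (\<Sum>c\<in>h ` M. \<Sum>u\<in>{u\<in>M. h u = c}. p u u)"
    by (rule sum.group[symmetric]) (simp_all add: assms(1))
  also have "\<dots> \<le> (\<Sum>c\<in>h ` M. 1)"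
  proof (rule sum_mono)
    fix c assume "c \<in> h ` M"
    then obtain u0 where u0: "u0 \<in> M" "h u0 = c" by blast
    have "p u = p u0" if "u \<in> {u\<in>M. h u = c}" for u
      using that u0 by (intro same_class) auto
    then have "(\<Sum>u\<in>{u\<in>M. h u = c}. p u u) = (\<Sum>u\<in>{u\<in>M. h u = c}. p u0 u)"
      by (intro sum.cong) auto
    also have "\<dots> \<le> 1"
      using u0 by (intro sum_le_1) auto
    finally show "(\<Sum>u\<in>{u\<in>M. h u = c}. p u u) \<le> 1" .
  qed
  finally show ?thesis by simp
qed

text \<open>Dominating the wrong-row part of \<open>row_density\<close> by a density that does not depend on
  the sent row: this overcounts the mass by \<open>ps / (2 ^ l - 1)\<close>.\<close>

definition noise_density :: "real \<Rightarrow> real \<Rightarrow> nat \<Rightarrow> bool list option \<Rightarrow> real" where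
  "noise_density pe ps l a =
     (case a of None \<Rightarrow> pe | Some e \<Rightarrow> if length e = l then ps / (2 ^ l - 1) else 0)"

definition noise_mass :: "real \<Rightarrow> real \<Rightarrow> nat \<Rightarrow> real" where
  "noise_mass pe ps l = pe + 2 ^ l * (ps / (2 ^ l - 1))"

definition noise_weight :: "real \<Rightarrow> real \<Rightarrow> nat \<Rightarrow> nat set \<Rightarrow> nat \<Rightarrow> bool list option list \<Rightarrow> real" where
  "noise_weight pe ps l S n y = (\<Prod>i\<in>{..<n} - S. noise_density pe ps l (y ! i))"

lemma noise_density_nonneg: "pe \<ge> 0 \<Longrightarrow> ps \<ge> 0 \<Longrightarrow> noise_density pe ps l a \<ge> 0"
  by (auto simp: noise_density_def split: option.split)

lemma noise_weight_nonneg: "pe \<ge> 0 \<Longrightarrow> ps \<ge> 0 \<Longrightarrow> noise_weight pe ps l S n y \<ge> 0"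
  unfolding noise_weight_def by (intro prod_nonneg) (simp add: noise_density_nonneg)

lemma noise_mass_nonneg: "pe \<ge> 0 \<Longrightarrow> ps \<ge> 0 \<Longrightarrow> noise_mass pe ps l \<ge> 0"
  by (simp add: noise_mass_def)

lemma noise_mass_eq:
  assumes "l \<ge> 1" "pc + pe + ps = 1"
  shows "noise_mass pe ps l = 1 - pc + ps / (2 ^ l - 1)"
proof -
  have "2 ^ l * (ps / (2 ^ l - 1)) = ps + ps / (2 ^ l - 1)"
    using two_power_ge_2[OF assms(1)] by (simp add: field_simps)
  then show ?thesis using assms(2) by (simp add: noise_mass_def)
qed

lemma sum_noise_density: "(\<Sum>a\<in>row_outputs l. noise_density pe ps l a) = noise_mass pe ps l"
proof -
  have "(\<Sum>e\<in>bit_rows l. noise_density pe ps l (Some e)) = (\<Sum>e\<in>bit_rows l. ps / (2 ^ l - 1))"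
    by (rule sum.cong) (auto simp: noise_density_def bit_rows_def)
  then show ?thesis
    by (simp add: sum_row_outputs noise_mass_def card_bit_rows noise_density_def)
qed

lemma row_density_le:
  "pc \<ge> 0 \<Longrightarrow> pe \<ge> 0 \<Longrightarrow> ps \<ge> 0 \<Longrightarrow>
    row_density pc pe ps l x a \<le> pc * of_bool (a = Some x) + noise_density pe ps l a"
  using noise_density_nonneg[of pe ps l a]
  by (auto simp: row_density_def noise_density_def split: option.split)

lemma prod_of_bool:
  "finite A \<Longrightarrow> (\<Prod>i\<in>A. of_bool (P i) :: 'a :: comm_semiring_1) = of_bool (\<forall>i\<in>A. P i)"
  by (induction A rule: finite_induct) auto

text \<open>Expanding the product over rows: \<open>S\<close> is the set of rows that are received correctly.\<close>

lemma prod_row_density_le: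
  assumes "pc \<ge> 0" "pe \<ge> 0" "ps \<ge> 0"
  shows "(\<Prod>i<n. row_density pc pe ps l (x ! i) (y ! i)) \<le>
    (\<Sum>S\<in>Pow {..<n}. pc ^ card S *
       (of_bool (\<forall>i\<in>S. y ! i = Some (x ! i)) * noise_weight pe ps l S n y))"
proof -
  have "(\<Prod>i<n. row_density pc pe ps l (x ! i) (y ! i)) \<le>
      (\<Prod>i<n. pc * of_bool (y ! i = Some (x ! i)) + noise_density pe ps l (y ! i))"
    by (intro prod_mono conjI row_density_le row_density_nonneg assms)
  also have "\<dots> = (\<Sum>S\<in>Pow {..<n}. (\<Prod>i\<in>S. pc * of_bool (y ! i = Some (x ! i))) * noise_weight pe ps l S n y)"
    unfolding noise_weight_def by (rule prod_add) simp
  also have "\<dots> = (\<Sum>S\<in>Pow {..<n}. pc ^ card S *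
       (of_bool (\<forall>i\<in>S. y ! i = Some (x ! i)) * noise_weight pe ps l S n y))"
    by (intro sum.cong refl) (auto simp: prod.distrib prod_of_bool dest: finite_subset)
  finally show ?thesis .
qed

lemma sum_lists_length_prod:
  fixes f :: "nat \<Rightarrow> 'a \<Rightarrow> 'b :: comm_semiring_1"
  assumes "finite A"
  shows "(\<Sum>y\<in>{y. set y \<subseteq> A \<and> length y = n}. \<Prod>i<n. f i (y ! i)) = (\<Prod>i<n. \<Sum>a\<in>A. f i a)"
proof (induction n arbitrary: f)
  case 0
  have "{y. set y \<subseteq> A \<and> length y = 0} = {[]}" by auto
  then show ?case by simp
next
  case (Suc n)
  let ?Y = "\<lambda>n. {y. set y \<subseteq> A \<and> length y = n}"
  have Y: "?Y (Suc n) = (\<lambda>(a, ys). a # ys) ` (A \<times> ?Y n)"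
  proof
    show "?Y (Suc n) \<subseteq> (\<lambda>(a, ys). a # ys) ` (A \<times> ?Y n)"
    proof
      fix y assume "y \<in> ?Y (Suc n)"
      then obtain a ys where "y = a # ys" "a \<in> A" "ys \<in> ?Y n" by (cases y) auto
      then show "y \<in> (\<lambda>(a, ys). a # ys) ` (A \<times> ?Y n)" by force
    qed
  qed auto
  have inj: "inj_on (\<lambda>(a, ys). a # ys) (A \<times> ?Y n)"
    by (auto simp: inj_on_def)
  have "(\<Sum>y\<in>?Y (Suc n). \<Prod>i<Suc n. f i (y ! i)) =
      (\<Sum>(a, ys)\<in>A \<times> ?Y n. f 0 a * (\<Prod>i<n. f (Suc i) (ys ! i)))"
    unfolding Y by (subst sum.reindex[OF inj])
      (auto simp: prod.lessThan_Suc_shift simp del: prod.lessThan_Suc intro!: sum.cong)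
  also have "\<dots> = (\<Sum>a\<in>A. f 0 a) * (\<Sum>ys\<in>?Y n. \<Prod>i<n. f (Suc i) (ys ! i))"
    by (subst sum.cartesian_product[symmetric]) (rule sum_product[symmetric])
  also have "\<dots> = (\<Prod>i<Suc n. \<Sum>a\<in>A. f i a)"
    using Suc.IH[of "\<lambda>i. f (Suc i)"] by (simp add: prod.lessThan_Suc_shift del: prod.lessThan_Suc)
  finally show ?case .
qed

lemma sum_noise_weight:
  assumes "S \<subseteq> {..<n}"
  shows "(\<Sum>v\<in>{v\<in>output_lists l n. \<forall>i\<in>S. v ! i = None}. noise_weight pe ps l S n v)
       = noise_mass pe ps l ^ (n - card S)"
proof -
  define f where "f i a = (if i \<in> S then of_bool (a = None) else noise_density pe ps l a)" for i a
  have fin: "finite S" using assms finite_subset by blast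
  have split: "(\<Prod>i<n. g i) = (\<Prod>i\<in>S. g i) * (\<Prod>i\<in>{..<n} - S. g i)" for g :: "nat \<Rightarrow> real"
    using prod.subset_diff[OF assms] by (simp add: mult.commute)
  have f_prod: "(\<Prod>i<n. f i (v ! i)) =
      (if \<forall>i\<in>S. v ! i = None then noise_weight pe ps l S n v else 0)" for v
  proof -
    have "(\<Prod>i\<in>S. f i (v ! i)) = of_bool (\<forall>i\<in>S. v ! i = None)"
      using fin by (simp add: f_def prod_of_bool)
    moreover have "(\<Prod>i\<in>{..<n} - S. f i (v ! i)) = noise_weight pe ps l S n v"
      by (simp add: f_def noise_weight_def)
    ultimately show ?thesis by (simp add: split)
  qed
  have "(\<Sum>v\<in>{v\<in>output_lists l n. \<forall>i\<in>S. v ! i = None}. noise_weight pe ps l S n v)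
      = (\<Sum>v\<in>output_lists l n. \<Prod>i<n. f i (v ! i))"
    by (simp add: sum.inter_filter f_prod)
  also have "\<dots> = (\<Prod>i<n. \<Sum>a\<in>row_outputs l. f i a)"
    unfolding output_lists_def by (rule sum_lists_length_prod) simp
  also have "\<dots> = (\<Prod>i\<in>{..<n} - S. noise_mass pe ps l)"
  proof -
    have "(\<Sum>a\<in>row_outputs l. f i a) = (if i \<in> S then 1 else noise_mass pe ps l)" for i
      using sum_noise_density[of pe ps l] by (cases "i \<in> S") (simp_all add: f_def row_outputs_def)
    then show ?thesis by (simp add: split)
  qed
  also have "\<dots> = noise_mass pe ps l ^ (n - card S)"
    using assms fin by (simp add: card_Diff_subset)
  finally show ?thesis .
qed

lemma mem_output_lists_iff_nth:
  "y \<in> output_lists l n \<longleftrightarrow> length y = n \<and> (\<forall>i<n. y ! i \<in> row_outputs l)"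
  by (auto simp: output_lists_def set_conv_nth)

lemma sum_output_lists_agree:
  assumes "S \<subseteq> {..<n}" "\<And>i. i \<in> S \<Longrightarrow> c i \<in> row_outputs l"
  shows "(\<Sum>y\<in>{y\<in>output_lists l n. \<forall>i\<in>S. y ! i = c i}. f y)
       = (\<Sum>v\<in>{v\<in>output_lists l n. \<forall>i\<in>S. v ! i = None}. f (map (override_on ((!) v) c S) [0..<n]))"
proof -
  let ?A = "{y\<in>output_lists l n. \<forall>i\<in>S. y ! i = c i}"
  let ?V = "{v\<in>output_lists l n. \<forall>i\<in>S. v ! i = None}"
  let ?fill = "\<lambda>v. map (override_on ((!) v) c S) [0..<n]"
  let ?blank = "\<lambda>y. map (override_on ((!) y) (\<lambda>_. None) S) [0..<n]"
  have "?fill (?blank y) = y" if "y \<in> ?A" for y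
    using that by (intro nth_equalityI) (auto simp: mem_output_lists_iff_nth override_on_def)
  moreover have "?blank (?fill v) = v" if "v \<in> ?V" for v
    using that by (intro nth_equalityI) (auto simp: mem_output_lists_iff_nth override_on_def)
  moreover have "?blank y \<in> ?V" if "y \<in> ?A" for y
    using that assms(1) by (auto simp: mem_output_lists_iff_nth override_on_def row_outputs_def)
  moreover have "?fill v \<in> ?A" if "v \<in> ?V" for v
    using that assms by (auto simp: mem_output_lists_iff_nth override_on_def)
  ultimately show ?thesis
    by (intro sum.reindex_bij_witness[of ?A ?fill ?blank]) auto
qed

lemma mset_nth_split:
  assumes "length y = n" "S \<subseteq> {..<n}"
  shows "mset y = image_mset ((!) y) (mset_set S) + image_mset ((!) y) (mset_set ({..<n} - S))"
proof -
  have "mset y = image_mset ((!) y) (mset_set {..<n})"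
    using assms(1) by (metis map_nth mset_map mset_upt atLeast0LessThan)
  also have "mset_set {..<n} = mset_set S + mset_set ({..<n} - S)"
    using assms(2) by (metis mset_set_Union finite_lessThan finite_subset Diff_disjoint Diff_partition finite_Diff)
  finally show ?thesis by simp
qed

lemma card_mset_override_on_le:
  assumes "finite A" "S \<subseteq> {..<n}" "\<And>u. u \<in> M \<Longrightarrow> c u ` S \<subseteq> A"
  shows "card ((\<lambda>u. mset (map (override_on ((!) v) (c u) S) [0..<n])) ` M)
       \<le> card (multisets_of_size A (card S))"
proof -
  define rest where "rest = image_mset ((!) v) (mset_set ({..<n} - S))"
  have fin: "finite S" using assms(2) finite_subset by blast
  have "mset (map (override_on ((!) v) (c u) S) [0..<n]) = image_mset (c u) (mset_set S) + rest" for u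
  proof -
    have "image_mset ((!) (map (override_on ((!) v) (c u) S) [0..<n])) (mset_set S) = image_mset (c u) (mset_set S)"
      using assms(2) fin by (intro image_mset_cong) (auto simp: override_on_def)
    moreover have "image_mset ((!) (map (override_on ((!) v) (c u) S) [0..<n])) (mset_set ({..<n} - S)) = rest"
      unfolding rest_def by (intro image_mset_cong) (auto simp: override_on_def)
    ultimately show ?thesis
      using mset_nth_split[OF _ assms(2), of "map (override_on ((!) v) (c u) S) [0..<n]"] by simp
  qed
  then have sub: "(\<lambda>u. mset (map (override_on ((!) v) (c u) S) [0..<n])) ` M
      \<subseteq> (\<lambda>\<mu>. \<mu> + rest) ` multisets_of_size A (card S)"
    using assms(3) fin by (auto simp: multisets_of_size_def)
  have "finite (multisets_of_size A (card S))"
    using assms(1) by (rule finite_multisets_of_size)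
  then show ?thesis
    using card_mono[OF _ sub] card_image_le order_trans by blast
qed

text \<open>The rows outside \<open>S\<close> of a received list are shared by all messages, so for a fixed noise
  pattern \<open>v\<close> the decoder succeeds for at most one message per multiset of rows on \<open>S\<close>.\<close>

lemma sum_agreeing_success_le:
  fixes q :: "bool list option list \<Rightarrow> 'u \<Rightarrow> real"
  assumes S: "S \<subseteq> {..<n}" and M: "finite M"
    and X: "X ` M \<subseteq> bin_mats n l"
    and q_mset: "\<And>y y'. mset y = mset y' \<Longrightarrow> q y = q y'"
    and q_sum: "\<And>y M'. M' \<subseteq> M \<Longrightarrow> (\<Sum>u\<in>M'. q y u) \<le> 1"
    and "pe \<ge> 0" "ps \<ge> 0"
  shows "(\<Sum>u\<in>M. \<Sum>y\<in>output_lists l n.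
            of_bool (\<forall>i\<in>S. y ! i = Some (X u ! i)) * noise_weight pe ps l S n y * q y u)
     \<le> noise_mass pe ps l ^ (n - card S) *
          min (card M) (card (multisets_of_size (Some ` bit_rows l) (card S)))"
proof -
  let ?V = "{v\<in>output_lists l n. \<forall>i\<in>S. v ! i = None}"
  let ?G = "noise_weight pe ps l S n"
  let ?B = "min (card M) (card (multisets_of_size (Some ` bit_rows l) (card S)))"
  define fill where "fill u v = map (override_on ((!) v) (\<lambda>i. Some (X u ! i)) S) [0..<n]" for u v
  have rows: "(\<lambda>i. Some (X u ! i)) ` S \<subseteq> Some ` bit_rows l" if "u \<in> M" for u
    using that X S by (fastforce simp: bin_mats_def bit_rows_def)
  have G_fill: "?G (fill u v) = ?G v" for u v
    unfolding noise_weight_def fill_def by (intro prod.cong) (auto simp: override_on_def)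
  have "(\<Sum>u\<in>M. \<Sum>y\<in>output_lists l n.
            of_bool (\<forall>i\<in>S. y ! i = Some (X u ! i)) * ?G y * q y u)
      = (\<Sum>u\<in>M. \<Sum>v\<in>?V. ?G v * q (fill u v) u)"
  proof (rule sum.cong[OF refl])
    fix u assume "u \<in> M"
    then have "(\<Sum>y\<in>{y\<in>output_lists l n. \<forall>i\<in>S. y ! i = Some (X u ! i)}. ?G y * q y u)
        = (\<Sum>v\<in>?V. ?G (fill u v) * q (fill u v) u)"
      unfolding fill_def using rows S by (intro sum_output_lists_agree) (auto simp: row_outputs_def)
    then show "(\<Sum>y\<in>output_lists l n. of_bool (\<forall>i\<in>S. y ! i = Some (X u ! i)) * ?G y * q y u)
        = (\<Sum>v\<in>?V. ?G v * q (fill u v) u)"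
      by (simp add: G_fill mult.assoc Int_def)
  qed
  also have "\<dots> = (\<Sum>v\<in>?V. ?G v * (\<Sum>u\<in>M. q (fill u v) u))"
    by (simp add: sum.swap[of _ M] sum_distrib_left)
  also have "\<dots> \<le> (\<Sum>v\<in>?V. ?G v * ?B)"
  proof (intro sum_mono mult_left_mono)
    fix v
    have "(\<Sum>u\<in>M. q (fill u v) u) \<le> card ((\<lambda>u. mset (fill u v)) ` M)"
      using M by (rule sum_diagonal_le_card_image) (auto intro: q_mset q_sum)
    also have "\<dots> \<le> ?B"
      using card_mset_override_on_le[where c = "\<lambda>u i. Some (X u ! i)" and v = v, OF _ S rows]
        card_image_le[OF M, of "\<lambda>u. mset (fill u v)"]
      by (simp add: fill_def)
    finally show "(\<Sum>u\<in>M. q (fill u v) u) \<le> ?B" .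
    show "0 \<le> ?G v" using assms(6,7) by (rule noise_weight_nonneg)
  qed
  also have "\<dots> = noise_mass pe ps l ^ (n - card S) * ?B"
    by (simp add: sum_distrib_right[symmetric] sum_noise_weight[OF S])
  finally show ?thesis .
qed

lemma sum_success_le:
  fixes q :: "bool list option list \<Rightarrow> 'u \<Rightarrow> real"
  assumes M: "finite M" and X: "X ` M \<subseteq> bin_mats n l"
    and q_nonneg: "\<And>y u. q y u \<ge> 0"
    and q_mset: "\<And>y y'. mset y = mset y' \<Longrightarrow> q y = q y'"
    and q_sum: "\<And>y M'. M' \<subseteq> M \<Longrightarrow> (\<Sum>u\<in>M'. q y u) \<le> 1"
    and "pc \<ge> 0" "pe \<ge> 0" "ps \<ge> 0"
  shows "(\<Sum>u\<in>M. \<Sum>y\<in>output_lists l n. (\<Prod>i<n. row_density pc pe ps l (X u ! i) (y ! i)) * q y u)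
     \<le> (\<Sum>S\<in>Pow {..<n}. pc ^ card S * noise_mass pe ps l ^ (n - card S) *
          min (card M) (card (multisets_of_size (Some ` bit_rows l) (card S))))"
proof -
  let ?agree = "\<lambda>S u y. of_bool (\<forall>i\<in>S. y ! i = Some (X u ! i)) * noise_weight pe ps l S n y"
  have "(\<Sum>u\<in>M. \<Sum>y\<in>output_lists l n. (\<Prod>i<n. row_density pc pe ps l (X u ! i) (y ! i)) * q y u)
      \<le> (\<Sum>u\<in>M. \<Sum>y\<in>output_lists l n. (\<Sum>S\<in>Pow {..<n}. pc ^ card S * ?agree S u y) * q y u)"
    by (intro sum_mono mult_right_mono prod_row_density_le q_nonneg assms(6-8))
  also have "\<dots> = (\<Sum>S\<in>Pow {..<n}. pc ^ card S *
      (\<Sum>u\<in>M. \<Sum>y\<in>output_lists l n. ?agree S u y * q y u))"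
    by (simp add: sum_distrib_left sum_distrib_right sum.swap[of _ "Pow {..<n}"] mult.assoc
        del: sum_of_bool_mult_eq)
  also have "\<dots> \<le> (\<Sum>S\<in>Pow {..<n}. pc ^ card S * (noise_mass pe ps l ^ (n - card S) *
      min (card M) (card (multisets_of_size (Some ` bit_rows l) (card S)))))"
    using assms(6-8) by (intro sum_mono mult_left_mono sum_agreeing_success_le[OF _ M X q_mset q_sum]) auto
  finally show ?thesis by (simp add: mult.assoc)
qed

section \<open>The finite-length converse bound\<close>

lemma sum_Pow_power_card:
  fixes a b :: "'a :: comm_semiring_1"
  shows "(\<Sum>S\<in>Pow {..<n}. a ^ card S * b ^ (n - card S)) = (a + b) ^ n"
proof -
  have "(a + b) ^ n = (\<Sum>S\<in>Pow {..<n}. (\<Prod>i\<in>S. a) * (\<Prod>i\<in>{..<n} - S. b))"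
    using prod_add[of "{..<n}" "\<lambda>_. a" "\<lambda>_. b"] by simp
  also have "\<dots> = (\<Sum>S\<in>Pow {..<n}. a ^ card S * b ^ (n - card S))"
  proof (intro sum.cong refl)
    fix S assume "S \<in> Pow {..<n}"
    then have "S \<subseteq> {..<n}" "finite S" using finite_subset by auto
    then show "(\<Prod>i\<in>S. a) * (\<Prod>i\<in>{..<n} - S. b) = a ^ card S * b ^ (n - card S)"
      by (simp add: card_Diff_subset)
  qed
  finally show ?thesis by simp
qed

text \<open>A Chernoff-type estimate: \<open>[j > m] \<le> t ^ (j - m)\<close> for \<open>t \<ge> 1\<close>.\<close>

lemma sum_Pow_min_le:
  fixes a b t N :: real and B :: "nat \<Rightarrow> real"
  assumes "a \<ge> 0" "b \<ge> 0" "t \<ge> 1" "N \<ge> 0" "mono B" "B m \<ge> 0"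
  shows "(\<Sum>S\<in>Pow {..<n}. a ^ card S * b ^ (n - card S) * min N (B (card S)))
      \<le> N * (a * t + b) ^ n / t ^ m + B m * (a + b) ^ n"
proof -
  have min_le: "min N (B j) \<le> N / t ^ m * t ^ j + B m" for j
  proof (cases "j \<le> m")
    case True
    then have "B j \<le> B m" using \<open>mono B\<close> by (simp add: monoD)
    moreover have "N / t ^ m * t ^ j \<ge> 0" using assms(3,4) by simp
    ultimately show ?thesis by linarith
  next
    case False
    then have "t ^ m \<le> t ^ j" using assms(3) by (intro power_increasing) auto
    then have "N \<le> N / t ^ m * t ^ j"
      using assms(3,4) by (simp add: field_simps mult_left_mono)
    then show ?thesis using assms(6) by linarith
  qed
  have "(\<Sum>S\<in>Pow {..<n}. a ^ card S * b ^ (n - card S) * min N (B (card S)))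
      \<le> (\<Sum>S\<in>Pow {..<n}. a ^ card S * b ^ (n - card S) * (N / t ^ m * t ^ card S + B m))"
    using assms(1,2) by (intro sum_mono mult_left_mono min_le) auto
  also have "\<dots> = N / t ^ m * (\<Sum>S\<in>Pow {..<n}. (a * t) ^ card S * b ^ (n - card S))
      + B m * (\<Sum>S\<in>Pow {..<n}. a ^ card S * b ^ (n - card S))"
    by (simp add: sum.distrib sum_distrib_left algebra_simps power_mult_distrib)
  also have "\<dots> = N * (a * t + b) ^ n / t ^ m + B m * (a + b) ^ n"
    by (simp add: sum_Pow_power_card)
  finally show ?thesis .
qed

lemma card_multisets_of_size_bit_rows:
  "card (multisets_of_size (Some ` bit_rows l) j) = (2 ^ l + j - 1) choose j"
  by (simp add: card_multisets_of_size card_image card_bit_rows)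

lemma mono_multichoose:
  assumes "K \<ge> 1"
  shows "mono (\<lambda>j. (K + j - 1) choose j)"
proof
  fix i j :: nat assume "i \<le> j"
  have "(K + i - 1) choose i = (K + i - 1) choose (K - 1)"
    using assms by (subst binomial_symmetric) auto
  also have "\<dots> \<le> (K + j - 1) choose (K - 1)"
    using \<open>i \<le> j\<close> by (intro binomial_right_mono) simp
  also have "\<dots> = (K + j - 1) choose j"
    using assms by (subst binomial_symmetric) auto
  finally show "(K + i - 1) choose i \<le> (K + j - 1) choose j" .
qed

lemma finite_bin_mats: "finite (bin_mats k w)"
  and card_bin_mats: "card (bin_mats k w) = 2 ^ (k * w)"
proof -
  have eq: "bin_mats k w = {M. set M \<subseteq> bit_rows w \<and> length M = k}"
    by (auto simp: bin_mats_def bit_rows_def)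
  show "finite (bin_mats k w)" "card (bin_mats k w) = 2 ^ (k * w)"
    unfolding eq by (simp_all add: finite_lists_length_eq card_lists_length_eq card_bit_rows mult.commute
        flip: power_mult)
qed

lemma one_minus_err_prob_eq:
  "1 - err_prob pc pe ps l k w enc dec
     = (\<Sum>u\<in>bin_mats k w. measure_pmf.prob (outer_chan pc pe ps l (enc u)) {z. dec z = u}) / 2 ^ (k * w)"
proof -
  have "measure_pmf.prob p {z. dec z \<noteq> u} = 1 - measure_pmf.prob p {z. dec z = u}" for p u
    using measure_pmf.prob_compl[of "{z. dec z = u}" p]
    by (simp add: Compl_eq_Diff_UNIV[symmetric] Collect_neg_eq)
  then show ?thesis
    by (simp add: err_prob_def card_bin_mats sum_subtractf diff_divide_distrib)
qed

lemma sum_success_prob_le: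
  assumes code: "is_code n l k w enc" and "l \<ge> 1"
    and "pc \<ge> 0" "pe \<ge> 0" "ps \<ge> 0" "pc + pe + ps = 1"
  shows "(\<Sum>u\<in>bin_mats k w. measure_pmf.prob (outer_chan pc pe ps l (enc u)) {z. dec z = u})
    \<le> (\<Sum>S\<in>Pow {..<n}. pc ^ card S * noise_mass pe ps l ^ (n - card S) *
          min (2 ^ (k * w)) (real ((2 ^ l + card S - 1) choose card S)))"
proof -
  define q where "q y u = measure_pmf.prob (chan2 y) {z. dec z = u}" for y u
  have M: "finite (bin_mats k w)" by (rule finite_bin_mats)
  have X: "enc ` bin_mats k w \<subseteq> bin_mats n l"
    using code by (simp add: is_code_def)
  have "measure_pmf.prob (outer_chan pc pe ps l (enc u)) {z. dec z = u}
      = (\<Sum>y\<in>output_lists l n. (\<Prod>i<n. row_density pc pe ps l (enc u ! i) (y ! i)) * q y u)"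
    if "u \<in> bin_mats k w" for u
    using that X prob_outer_chan[of "enc u" l pc pe ps "{z. dec z = u}"] assms(2-6)
    by (auto simp: q_def bin_mats_def)
  then have "(\<Sum>u\<in>bin_mats k w. measure_pmf.prob (outer_chan pc pe ps l (enc u)) {z. dec z = u})
      = (\<Sum>u\<in>bin_mats k w. \<Sum>y\<in>output_lists l n.
           (\<Prod>i<n. row_density pc pe ps l (enc u ! i) (y ! i)) * q y u)"
    by (rule sum.cong[OF refl])
  also have "\<dots> \<le> (\<Sum>S\<in>Pow {..<n}. pc ^ card S * noise_mass pe ps l ^ (n - card S) *
          min (card (bin_mats k w)) (card (multisets_of_size (Some ` bit_rows l) (card S))))"
  proof (rule sum_success_le[OF M X _ _ _ assms(3-5)])
    show "q y u \<ge> 0" for y u by (simp add: q_def)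
    show "q y = q y'" if "mset y = mset y'" for y y'
      using chan2_mset_eq[OF that] by (simp add: fun_eq_iff q_def)
    show "(\<Sum>u\<in>M'. q y u) \<le> 1" if "M' \<subseteq> bin_mats k w" for y M'
      unfolding q_def using that M by (intro sum_prob_preimages_le_1) (rule finite_subset)
  qed
  finally show ?thesis
    by (simp add: card_bin_mats card_multisets_of_size_bit_rows of_nat_min)
qed

lemma one_minus_err_prob_le:
  assumes code: "is_code n l k w enc" and "l \<ge> 1" "t \<ge> 1"
    and "pc \<ge> 0" "pe \<ge> 0" "ps \<ge> 0" "pc + pe + ps = 1"
  shows "1 - err_prob pc pe ps l k w enc dec \<le>
    (pc * t + noise_mass pe ps l) ^ n / t ^ m
      + real ((2 ^ l + m - 1) choose m) * (pc + noise_mass pe ps l) ^ n / 2 ^ (k * w)"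
proof -
  have "mono (\<lambda>j. real ((2 ^ l + j - 1) choose j))"
    using mono_multichoose[of "2 ^ l"] by (simp add: mono_def)
  then have "(\<Sum>S\<in>Pow {..<n}. pc ^ card S * noise_mass pe ps l ^ (n - card S) *
          min (2 ^ (k * w)) (real ((2 ^ l + card S - 1) choose card S)))
      \<le> 2 ^ (k * w) * (pc * t + noise_mass pe ps l) ^ n / t ^ m
          + real ((2 ^ l + m - 1) choose m) * (pc + noise_mass pe ps l) ^ n"
    using assms(3,4) noise_mass_nonneg[OF assms(5,6)] by (intro sum_Pow_min_le) auto
  with sum_success_prob_le[OF code assms(2,4-7), of dec]
  have "(\<Sum>u\<in>bin_mats k w. measure_pmf.prob (outer_chan pc pe ps l (enc u)) {z. dec z = u}) / 2 ^ (k * w)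
      \<le> (2 ^ (k * w) * (pc * t + noise_mass pe ps l) ^ n / t ^ m
          + real ((2 ^ l + m - 1) choose m) * (pc + noise_mass pe ps l) ^ n) / 2 ^ (k * w)"
    by (intro divide_right_mono) auto
  then show ?thesis
    unfolding one_minus_err_prob_eq by (simp add: add_divide_distrib)
qed

section \<open>Asymptotics\<close>

lemma power_le_exp_mult_fact: "real m ^ m \<le> exp (real m) * fact m"
proof -
  have "(\<lambda>i. real m ^ i /\<^sub>R fact i) sums exp (real m)"
    by (rule exp_converges)
  then have "real m ^ m / fact m \<le> exp (real m)"
    using sum_le_suminf[of "\<lambda>i. real m ^ i /\<^sub>R fact i" "{m}"] by (auto simp: sums_iff divide_inverse mult.commute)
  then show ?thesis
    by (simp add: divide_le_eq mult.commute)
qed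

lemma binomial_le_exp_power: "real (a choose m) \<le> (exp 1 * real a / real m) ^ m"
proof (cases "m = 0")
  case False
  have "real (a choose m) * fact m \<le> real a ^ m"
    using binomial_fact_pow[of a m] by (metis of_nat_fact of_nat_le_iff of_nat_mult of_nat_power)
  then have "real (a choose m) * fact m * real m ^ m \<le> real a ^ m * (exp (real m) * fact m)"
    using power_le_exp_mult_fact[of m] by (intro mult_mono) auto
  then have "real (a choose m) * real m ^ m \<le> real a ^ m * exp (real m)"
    by (simp add: algebra_simps)
  moreover have "exp 1 ^ m = exp (real m)"
    by (metis exp_of_nat_mult mult.right_neutral)
  ultimately show ?thesis
    using False by (simp add: power_divide power_mult_distrib field_simps)
qed simp


lemma log_codebook_le:
  assumes "2 ^ K \<le> 4 * real ((2 ^ l + m - 1) choose m)" "1 \<le> m" "m \<le> 2 ^ l"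
  shows "real K \<le> 2 + real m * (real l + 1 + log 2 (exp 1) - log 2 (real m))"
proof -
  have "real (2 ^ l + m - 1) \<le> real (2 ^ Suc l)"
    using assms(3) by (intro of_nat_mono) simp
  then have "exp 1 * real (2 ^ l + m - 1) / real m \<le> exp 1 * 2 ^ Suc l / real m"
    by (intro divide_right_mono mult_left_mono) auto
  then have "real ((2 ^ l + m - 1) choose m) \<le> (exp 1 * 2 ^ Suc l / real m) ^ m"
    using binomial_le_exp_power[of "2 ^ l + m - 1" m] power_mono order_trans by fastforce
  then have "(2::real) ^ K \<le> 4 * (exp 1 * 2 ^ Suc l / real m) ^ m"
    using assms(1) by linarith
  then have "log 2 (2 ^ K) \<le> log 2 (4 * (exp 1 * 2 ^ Suc l / real m) ^ m)"
    using assms(2) by (subst log_le_cancel_iff) auto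
  moreover have "log 2 (4 :: real) = 2"
    using log_nat_power[of 2 2 2] by simp
  ultimately show ?thesis
    using assms(2) by (simp add: log_mult log_divide log_nat_power algebra_simps)
qed

lemma two_power_growth:
  fixes l :: "nat \<Rightarrow> nat"
  assumes "beta > 1" and l: "(\<lambda>n. real (l n) / log 2 (real n)) \<longlonglongrightarrow> beta"
  shows "(\<lambda>n. real n / 2 ^ l n) \<longlonglongrightarrow> 0"
    and "filterlim (\<lambda>n. real (l n)) at_top sequentially"
proof -
  define b where "b = (1 + beta) / 2"
  have b: "1 < b" "b < beta" using assms(1) by (auto simp: b_def)
  have log_top: "filterlim (\<lambda>n. log 2 (real n)) at_top sequentially"
    by real_asymp
  have ev: "\<forall>\<^sub>F n in sequentially. b * log 2 (real n) < real (l n) \<and> 0 < log 2 (real n)"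
    using order_tendstoD(1)[OF l b(2)] eventually_gt_at_top[of 1]
  proof eventually_elim
    case (elim n)
    then have "0 < log 2 (real n)" by simp
    with elim show ?case by (simp add: pos_less_divide_eq mult.commute)
  qed
  show "filterlim (\<lambda>n. real (l n)) at_top sequentially"
  proof (rule filterlim_at_top_mono[OF _ ev[THEN eventually_mono]])
    show "filterlim (\<lambda>n. b * log 2 (real n)) at_top sequentially"
      using b(1) by (intro filterlim_tendsto_pos_mult_at_top[OF tendsto_const _ log_top]) simp
  qed auto
  show "(\<lambda>n. real n / 2 ^ l n) \<longlonglongrightarrow> 0"
  proof (rule tendsto_sandwich[OF _ _ tendsto_const])
    show "(\<lambda>n. real n powr (1 - b)) \<longlonglongrightarrow> 0"
      using b(1) by real_asymp
    show "\<forall>\<^sub>F n in sequentially. real n / 2 ^ l n \<le> real n powr (1 - b)"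
      using ev eventually_gt_at_top[of 0]
    proof eventually_elim
      case (elim n)
      have "2 powr (b * log 2 (real n)) = (2 powr log 2 (real n)) powr b"
        by (simp add: powr_powr mult.commute)
      then have "real n powr b = 2 powr (b * log 2 (real n))"
        using elim by simp
      also have "\<dots> \<le> 2 ^ l n"
        using elim by (simp add: powr_realpow[symmetric])
      finally have "real n / 2 ^ l n \<le> real n / real n powr b"
        using elim by (intro divide_left_mono) auto
      also have "\<dots> = real n powr (1 - b)"
        using elim by (simp add: powr_diff)
      finally show ?case .
    qed
  qed simp
qed

lemma power_one_plus_tendsto_1:
  fixes eps :: "nat \<Rightarrow> real"
  assumes "\<And>n. eps n \<ge> 0" "(\<lambda>n. real n * eps n) \<longlonglongrightarrow> 0"
  shows "(\<lambda>n. (1 + eps n) ^ n) \<longlonglongrightarrow> 1"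
proof (rule tendsto_sandwich[OF _ _ tendsto_const])
  have "(\<lambda>n. exp (real n * eps n)) \<longlonglongrightarrow> exp 0"
    by (intro tendsto_intros assms(2))
  then show "(\<lambda>n. exp (real n * eps n)) \<longlonglongrightarrow> 1" by simp
  have "(1 + eps n) ^ n \<le> exp (eps n) ^ n" for n
    using assms(1) by (intro power_mono) (auto simp: exp_ge_add_one_self add.commute)
  then show "\<forall>\<^sub>F n in sequentially. (1 + eps n) ^ n \<le> exp (real n * eps n)"
    by (simp add: exp_of_nat_mult)
  show "\<forall>\<^sub>F n in sequentially. 1 \<le> (1 + eps n) ^ n"
    using assms(1) by simp
qed

lemma exists_powr_gt_affine:
  fixes pc q :: real
  assumes "pc < q"
  shows "\<exists>t>1. pc * t + 1 - pc < t powr q"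
proof -
  define f where "f x = x powr q - pc * x" for x :: real
  have "((\<lambda>x. x powr q) has_real_derivative q * 1 powr (q - 1)) (at 1)"
    by (rule has_real_derivative_powr) simp
  then have "(f has_real_derivative (q - pc)) (at 1)"
    unfolding f_def by (auto intro!: derivative_eq_intros)
  then obtain d where d: "d > 0" "\<And>h. h > 0 \<Longrightarrow> h < d \<Longrightarrow> f 1 < f (1 + h)"
    using DERIV_pos_inc_right[of f "q - pc" 1] assms by auto
  then have "f 1 < f (1 + d / 2)" by simp
  then have "pc * (1 + d / 2) + 1 - pc < (1 + d / 2) powr q"
    by (simp add: f_def)
  moreover have "1 + d / 2 > 1" using d by simp
  ultimately show ?thesis by blast
qed

text \<open>The first term of \<open>sum_Pow_min_le\<close> is a Chernoff bound for more than \<open>q n\<close> of \<open>n\<close> rows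
  passing, each with probability \<open>pc < q\<close>; it decays once \<open>t\<close> is chosen with
  \<open>pc t + 1 - pc < t ^ q\<close>.\<close>

lemma chernoff_term_tendsto_0:
  fixes eps :: "nat \<Rightarrow> real"
  assumes "0 \<le> pc" "pc < q" "\<And>n. 0 \<le> eps n" and E: "(\<lambda>n. (1 + eps n) ^ n) \<longlonglongrightarrow> 1"
  obtains t where "t \<ge> 1" "(\<lambda>n. (pc * t + 1 - pc + eps n) ^ n / t ^ nat \<lfloor>q * real n\<rfloor>) \<longlonglongrightarrow> 0"
proof -
  obtain t where t: "t > 1" "pc * t + 1 - pc < t powr q"
    using exists_powr_gt_affine[OF assms(2)] by blast
  define a where "a = pc * t + 1 - pc"
  define r where "r = a / t powr q"
  have a: "a \<ge> 1" using assms(1) t(1) mult_left_mono[of 1 t pc] by (simp add: a_def)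
  have r: "0 < r" "r < 1" using a t by (simp_all add: r_def a_def)
  have q: "q > 0" using assms(1,2) by simp
  have le: "(a + eps n) ^ n / t ^ nat \<lfloor>q * real n\<rfloor> \<le> t * r ^ n * (1 + eps n) ^ n" for n
  proof -
    have "a + eps n \<le> a * (1 + eps n)"
      using mult_right_mono[OF a assms(3)[of n]] by (simp add: algebra_simps)
    then have "(a + eps n) ^ n \<le> (a * (1 + eps n)) ^ n"
      using a assms(3)[of n] by (intro power_mono) auto
    moreover have "(t powr q) ^ n / t \<le> t ^ nat \<lfloor>q * real n\<rfloor>"
    proof -
      have "(t powr q) ^ n / t = t powr (q * real n - 1)"
        using t(1) by (simp add: powr_diff powr_realpow[symmetric] powr_powr)
      also have "\<dots> \<le> t powr real (nat \<lfloor>q * real n\<rfloor>)"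
        using t(1) q by (intro powr_mono) linarith+
      finally show ?thesis using t(1) by (simp add: powr_realpow)
    qed
    ultimately have "(a + eps n) ^ n / t ^ nat \<lfloor>q * real n\<rfloor> \<le> (a * (1 + eps n)) ^ n / ((t powr q) ^ n / t)"
      using t(1) a assms(3)[of n] by (intro frac_le) auto
    also have "\<dots> = t * r ^ n * (1 + eps n) ^ n"
      unfolding power_mult_distrib r_def power_divide using t(1) by (simp add: field_simps)
    finally show ?thesis .
  qed
  have "(\<lambda>n. t * r ^ n * (1 + eps n) ^ n) \<longlonglongrightarrow> t * 0 * 1"
    by (intro tendsto_intros E LIMSEQ_power_zero) (use r in simp)
  then have upper: "(\<lambda>n. t * r ^ n * (1 + eps n) ^ n) \<longlonglongrightarrow> 0"
    by simp
  have "0 \<le> (a + eps n) ^ n / t ^ nat \<lfloor>q * real n\<rfloor>" for n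
    using a t(1) assms(3)[of n] by simp
  then have "(\<lambda>n. (a + eps n) ^ n / t ^ nat \<lfloor>q * real n\<rfloor>) \<longlonglongrightarrow> 0"
    using le by (intro tendsto_sandwich[OF _ _ tendsto_const upper]) simp_all
  then show ?thesis
    using t(1) by (intro that[of t]) (simp_all add: a_def)
qed

lemma noise_excess_power_tendsto_1:
  fixes l :: "nat \<Rightarrow> nat" and ps :: real
  assumes "ps \<ge> 0" and l: "(\<lambda>n. real n / 2 ^ l n) \<longlonglongrightarrow> 0"
  shows "(\<lambda>n. (1 + ps / (2 ^ l n - 1)) ^ n) \<longlonglongrightarrow> 1"
proof (rule power_one_plus_tendsto_1)
  have le: "ps / (2 ^ l n - 1) \<le> 2 * ps / 2 ^ l n" for n
  proof (cases "l n = 0")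
    case False
    then have "(2::real) ^ l n \<ge> 2"
      using power_increasing[of 1 "l n" "2::real"] by simp
    then have "ps * 2 ^ l n \<le> 2 * ps * (2 ^ l n - 1)"
      using mult_left_mono[of 2 "2 ^ l n" ps] assms(1) by (simp add: algebra_simps)
    then show ?thesis
      using \<open>(2::real) ^ l n \<ge> 2\<close> by (simp add: field_simps)
  qed (simp add: assms(1))
  show nonneg: "0 \<le> ps / (2 ^ l n - 1)" for n
    using assms(1) by simp
  have "(\<lambda>n. 2 * ps * (real n / 2 ^ l n)) \<longlonglongrightarrow> 2 * ps * 0"
    by (intro tendsto_intros l)
  then have upper: "(\<lambda>n. 2 * ps * (real n / 2 ^ l n)) \<longlonglongrightarrow> 0"
    by simp
  have "real n * (ps / (2 ^ l n - 1)) \<le> 2 * ps * (real n / 2 ^ l n)" for n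
    using mult_left_mono[OF le[of n], of "real n"] by (simp add: mult_ac)
  moreover have "0 \<le> real n * (ps / (2 ^ l n - 1))" for n
    using nonneg[of n] by (intro mult_nonneg_nonneg) simp_all
  ultimately show "(\<lambda>n. real n * (ps / (2 ^ l n - 1))) \<longlonglongrightarrow> 0"
    by (intro tendsto_sandwich[OF _ _ tendsto_const upper] always_eventually allI)
qed

lemma eventually_le_of_success_bound:
  fixes e a b c d :: "'a \<Rightarrow> real"
  assumes "\<forall>\<^sub>F x in F. 1 - e x \<le> a x + b x * c x / d x"
    and "(e \<longlongrightarrow> 0) F" "(a \<longlongrightarrow> 0) F" "(c \<longlongrightarrow> 1) F" "\<And>x. 0 \<le> b x" "\<And>x. 0 < d x"
  shows "\<forall>\<^sub>F x in F. d x \<le> 4 * b x"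
proof -
  have "\<forall>\<^sub>F x in F. e x < 1 / 4" "\<forall>\<^sub>F x in F. a x < 1 / 4" "\<forall>\<^sub>F x in F. c x < 2"
    by (rule order_tendstoD(2)[OF assms(2)] order_tendstoD(2)[OF assms(3)]
        order_tendstoD(2)[OF assms(4)]; simp)+
  with assms(1) show ?thesis
  proof eventually_elim
  case (elim x)
  then have "1 / 2 \<le> b x * c x / d x" by linarith
  also have "\<dots> \<le> b x * 2 / d x"
    using elim assms(5,6)[of x] by (intro divide_right_mono mult_left_mono) auto
  finally show ?case using assms(6)[of x] by (simp add: field_simps)
  qed
qed

lemma nat_floor_mult_div_tendsto:
  assumes "q \<ge> 0"
  shows "(\<lambda>n. real (nat \<lfloor>q * real n\<rfloor>) / real n) \<longlonglongrightarrow> q"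
proof (rule tendsto_sandwich[of "\<lambda>n. q - 1 / real n" _ _ "\<lambda>n. q"])
  have floor: "q * real n - 1 < real (nat \<lfloor>q * real n\<rfloor>)"
    "real (nat \<lfloor>q * real n\<rfloor>) \<le> q * real n" for n
  proof -
    have "real (nat \<lfloor>q * real n\<rfloor>) = of_int \<lfloor>q * real n\<rfloor>" using assms by simp
    then show "q * real n - 1 < real (nat \<lfloor>q * real n\<rfloor>)" "real (nat \<lfloor>q * real n\<rfloor>) \<le> q * real n"
      by linarith+
  qed
  show "\<forall>\<^sub>F n in sequentially. q - 1 / real n \<le> real (nat \<lfloor>q * real n\<rfloor>) / real n"
    using eventually_gt_at_top[of 0]
  proof eventually_elim
    case (elim n)
    have "(q * real n - 1) / real n \<le> real (nat \<lfloor>q * real n\<rfloor>) / real n"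
      using floor(1)[of n] by (intro divide_right_mono) auto
    with elim show ?case by (simp add: diff_divide_distrib)
  qed
  show "\<forall>\<^sub>F n in sequentially. real (nat \<lfloor>q * real n\<rfloor>) / real n \<le> q"
    using eventually_gt_at_top[of 0]
    by eventually_elim (use floor in \<open>simp add: divide_le_eq\<close>)
  show "(\<lambda>n. q - 1 / real n) \<longlonglongrightarrow> q"
    using tendsto_diff[OF tendsto_const lim_const_over_n[of 1], of q] by simp
qed simp

lemma rate_le_of_codebook_bound:
  fixes l K :: "nat \<Rightarrow> nat"
  assumes "beta > 1" "q > 0"
    and l: "(\<lambda>n. real (l n) / log 2 (real n)) \<longlonglongrightarrow> beta"
    and K: "(\<lambda>n. real (K n) / real (n * l n)) \<longlonglongrightarrow> R"
    and bound: "\<forall>\<^sub>F n in sequentially.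
      2 ^ K n \<le> 4 * real ((2 ^ l n + nat \<lfloor>q * real n\<rfloor> - 1) choose nat \<lfloor>q * real n\<rfloor>)"
  shows "R \<le> q * (1 - 1 / beta)"
proof -
  define m where "m n = nat \<lfloor>q * real n\<rfloor>" for n
  define c where "c = 1 + log 2 (exp 1)"
  define ub where "ub n = 2 * (1 / real n) * (1 / real (l n)) + real (m n) / real n *
      (1 + (c - log 2 (real (m n) / real n)) * (1 / real (l n)) - log 2 (real n) / real (l n))" for n
  have m: "(\<lambda>n. real (m n) / real n) \<longlonglongrightarrow> q"
    unfolding m_def using assms(2) by (intro nat_floor_mult_div_tendsto) simp
  note growth = two_power_growth[OF assms(1) l]
  have inv_l: "(\<lambda>n. 1 / real (l n)) \<longlonglongrightarrow> 0"
    using tendsto_inverse_0_at_top[OF growth(2)] by (simp add: inverse_eq_divide)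
  have "(\<lambda>n. inverse (real (l n) / log 2 (real n))) \<longlonglongrightarrow> inverse beta"
    using l assms(1) by (intro tendsto_inverse) auto
  then have log_l: "(\<lambda>n. log 2 (real n) / real (l n)) \<longlonglongrightarrow> 1 / beta"
    by (simp add: inverse_eq_divide)
  have "ub \<longlonglongrightarrow> 2 * 0 * 0 + q * (1 + (c - log 2 q) * 0 - 1 / beta)"
    unfolding ub_def using assms(2)
    by (intro tendsto_intros m inv_l log_l lim_const_over_n) auto
  then have ub_lim: "ub \<longlonglongrightarrow> q * (1 - 1 / beta)"
    by simp
  have "\<forall>\<^sub>F n in sequentially. real (l n) \<ge> 1"
    using filterlim_at_top[THEN iffD1, OF growth(2), rule_format, of 1] .
  moreover have "\<forall>\<^sub>F n in sequentially. real (m n) / real n > 0"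
    using m assms(2) by (rule order_tendstoD)
  moreover have "\<forall>\<^sub>F n in sequentially. q * (real n / 2 ^ l n) < 1"
    using order_tendstoD(2)[OF tendsto_mult[OF tendsto_const growth(1), of q], of 1] by simp
  ultimately have "\<forall>\<^sub>F n in sequentially. real (K n) / real (n * l n) \<le> ub n"
    using bound eventually_gt_at_top[of 0]
  proof eventually_elim
    case (elim n)
    have "real (m n) \<le> q * real n" unfolding m_def using assms(2) by (simp add: of_nat_floor)
    also have "\<dots> < 2 ^ l n" using elim by (simp add: field_simps)
    finally have "m n \<le> 2 ^ l n" by (metis less_imp_le of_nat_le_iff of_nat_numeral of_nat_power)
    moreover have "1 \<le> m n" using elim by (simp add: zero_less_divide_iff)
    ultimately have "real (K n) \<le> 2 + real (m n) * (real (l n) + c - log 2 (real (m n)))"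
      using log_codebook_le[of "K n" "l n" "m n"] elim by (simp add: m_def c_def algebra_simps)
    also have "log 2 (real (m n)) = log 2 (real n) + log 2 (real (m n) / real n)"
      using elim \<open>1 \<le> m n\<close> by (simp add: log_divide)
    finally have "real (K n) / real (n * l n)
        \<le> (2 + real (m n) * (real (l n) + c - (log 2 (real n) + log 2 (real (m n) / real n)))) / real (n * l n)"
      using elim by (intro divide_right_mono) auto
    also have "\<dots> = ub n"
      using elim by (simp add: ub_def field_simps)
    finally show ?case .
  qed
  with K ub_lim show ?thesis
    by (intro LIMSEQ_le) (auto simp: eventually_sequentially)
qed

theorem lemma2:
  fixes beta delta pc pe ps R :: real
  assumes "beta > 1" and "delta > 0"
    and "pc \<ge> 0" and "pe \<ge> 0" and "ps \<ge> 0" and "pc + pe + ps = 1"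
    and "achievable_rate pc pe ps beta R"
  shows "R \<le> (pc + delta) * (1 - 1 / beta)"
proof -
  obtain l k w enc dec where code: "\<And>n. is_code n (l n) (k n) (w n) (enc n)"
    and lim_l: "(\<lambda>n. real (l n) / log 2 (real n)) \<longlonglongrightarrow> beta"
    and lim_R: "(\<lambda>n. real (k n * w n) / real (n * l n)) \<longlonglongrightarrow> R"
    and lim_err: "(\<lambda>n. err_prob pc pe ps (l n) (k n) (w n) (enc n) (dec n)) \<longlonglongrightarrow> 0"
    using assms(7) unfolding achievable_rate_def by blast
  define q where "q = pc + delta / 2"
  define m where "m n = nat \<lfloor>q * real n\<rfloor>" for n :: nat
  define eps where "eps n = ps / (2 ^ l n - 1)" for n
  have q: "pc < q" "0 < q" using assms(2,3) by (simp_all add: q_def)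
  note growth = two_power_growth[OF assms(1) lim_l]
  have E: "(\<lambda>n. (1 + eps n) ^ n) \<longlonglongrightarrow> 1"
    unfolding eps_def using assms(5) growth(1) by (rule noise_excess_power_tendsto_1)
  obtain t where t: "t \<ge> 1" and chernoff: "(\<lambda>n. (pc * t + 1 - pc + eps n) ^ n / t ^ m n) \<longlonglongrightarrow> 0"
    using chernoff_term_tendsto_0[OF assms(3) q(1) _ E] assms(5) unfolding m_def eps_def by auto
  have "\<forall>\<^sub>F n in sequentially. 1 - err_prob pc pe ps (l n) (k n) (w n) (enc n) (dec n) \<le>
      (pc * t + 1 - pc + eps n) ^ n / t ^ m n
        + real ((2 ^ l n + m n - 1) choose m n) * (1 + eps n) ^ n / 2 ^ (k n * w n)"
    using filterlim_at_top[THEN iffD1, OF growth(2), rule_format, of 1]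
  proof eventually_elim
    case (elim n)
    then have "pc * t + noise_mass pe ps (l n) = pc * t + 1 - pc + eps n"
      and "pc + noise_mass pe ps (l n) = 1 + eps n"
      using noise_mass_eq[OF _ assms(6)] by (simp_all add: eps_def)
    with one_minus_err_prob_le[OF code[of n] _ t assms(3-6), where dec = "dec n" and m = "m n"] elim
    show ?case
      by simp
  qed
  then have "\<forall>\<^sub>F n in sequentially. 2 ^ (k n * w n) \<le> 4 * real ((2 ^ l n + m n - 1) choose m n)"
    by (rule eventually_le_of_success_bound[OF _ lim_err chernoff E]) auto
  then have "R \<le> q * (1 - 1 / beta)"
    using rate_le_of_codebook_bound[where K = "\<lambda>n. k n * w n", OF assms(1) q(2) lim_l lim_R]
    by (simp add: m_def)
  also have "\<dots> \<le> (pc + delta) * (1 - 1 / beta)"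
    using assms(1,2) by (intro mult_right_mono) (simp_all add: q_def)
  finally show ?thesis .
qed

end
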